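(* Fix $p\in[1,\infty]$ and write $\|\cdot\|$ for the induced $\ell_p$ operator norm of matrices. Let $W^{(l)}\in\mathbb{R}^{n_l\times n_{l-1}}$ for $l=1,\dots,L$ and let $0\le\alpha^{(l)}\le\beta^{(l)}$ (elementwise) be vectors in $\mathbb{R}^{n_l}$ for $l=1,\dots,L-1$ (the slope bounds of the activations of an $L$-layer network $z^{(l)}=W^{(l)}a^{(l-1)}$, $a^{(l)}=\sigma^{(l)}(z^{(l)})$, $f=z^{(L)}$). Given loop-transformation vectors $d^{(l)}\in\mathbb{R}^{n_l}$, $l=1,\dots,L-1$, set $D^{(l)}=\mathrm{diag}(d^{(l)})$, $D'^{(l)}=\mathrm{diag}(\beta^{(l)}-d^{(l)})$ for $l\le L-1$, $D'^{(L)}=I$, and define $m^{(1)}=\|D'^{(1)}W^{(1)}\|$ and for $l=2,\dots,L$ $$m^{(l)}=\Big\|D'^{(l)}W^{(l)}\prod_{i=1}^{l-1}D^{(i)}W^{(i)}\Big\|+\sum_{j=1}^{l-1}\Big\|D'^{(l)}W^{(l)}\prod_{i=j+1}^{l-1}D^{(i)}W^{(i)}\Big\|\,m^{(j)}$$ (products ordered with the highest index on the left; empty product is the identity). Let $m^{(L)}(\mathcal{D})$ denote $m^{(L)}$ obtained with $d^{(l)}=\beta^{(l)}/2$ for all $l=1,\dots,L-1$, and $m^{(L)}(0)$ denote $m^{(L)}$ obtained with $d^{(l)}=0$ for all $l$ (the naive bound). Then $m^{(L)}(\mathcal{D})\le m^{(L)}(0)$. *)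

theory Defs
  imports "HOL-Library.Extended_Real" "Jordan_Normal_Form.Matrix"
begin

definition lp_norm :: "ereal \<Rightarrow> real vec \<Rightarrow> real" where
  "lp_norm p x =
     (if p = \<infinity> then Max ({0} \<union> {\<bar>x $ i\<bar> | i. i < dim_vec x})
      else (\<Sum>i<dim_vec x. \<bar>x $ i\<bar> powr real_of_ereal p) powr (1 / real_of_ereal p))"

definition op_norm :: "ereal \<Rightarrow> real mat \<Rightarrow> real" where
  "op_norm p A = Sup {lp_norm p (A *\<^sub>v x) | x. x \<in> carrier_vec (dim_col A) \<and> lp_norm p x \<le> 1}"

definition diag_of_vec :: "real vec \<Rightarrow> real mat" where
  "diag_of_vec v = mat (dim_vec v) (dim_vec v) (\<lambda>(i, j). if i = j then v $ i else 0)"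

text \<open>chain n D W j k = D(k) W(k) D(k-1) W(k-1) ... D(j+1) W(j+1)
  (highest index on the left); the identity of size n j when the product is empty.\<close>
fun chain :: "(nat \<Rightarrow> nat) \<Rightarrow> (nat \<Rightarrow> real mat) \<Rightarrow> (nat \<Rightarrow> real mat) \<Rightarrow> nat \<Rightarrow> nat \<Rightarrow> real mat" where
  "chain n D W j 0 = 1\<^sub>m (n j)"
| "chain n D W j (Suc k) =
     (if Suc k \<le> j then 1\<^sub>m (n j) else D (Suc k) * W (Suc k) * chain n D W j k)"

definition Dprime :: "(nat \<Rightarrow> nat) \<Rightarrow> nat \<Rightarrow> (nat \<Rightarrow> real vec) \<Rightarrow> (nat \<Rightarrow> real vec) \<Rightarrow> nat \<Rightarrow> real mat" where
  "Dprime n L beta d l = (if l = L then 1\<^sub>m (n L) else diag_of_vec (beta l - d l))"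

function mbound :: "ereal \<Rightarrow> (nat \<Rightarrow> nat) \<Rightarrow> nat \<Rightarrow> (nat \<Rightarrow> real mat) \<Rightarrow> (nat \<Rightarrow> real vec)
                    \<Rightarrow> (nat \<Rightarrow> real vec) \<Rightarrow> nat \<Rightarrow> real" where
  "mbound p n L W beta d l =
     (if l = 0 then 0 else
        op_norm p (Dprime n L beta d l * W l * chain n (\<lambda>i. diag_of_vec (d i)) W 0 (l - 1))
      + (\<Sum>j\<in>{1..<l}. op_norm p (Dprime n L beta d l * W l * chain n (\<lambda>i. diag_of_vec (d i)) W j (l - 1))
                        * mbound p n L W beta d j))"
  by pat_completeness auto
termination by (relation "measure (\<lambda>(p, n, L, W, beta, d, l). l)") auto

end

theory Submission
  imports Defs
begin

text \<open>
  With d = beta/2 the matrices D(l) and D'(l) coincide (for l < L), so every product in the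
  recursion for m(l) is a segment B(l) B(l-1) ... B(j+1) of the layer matrices B(l) = D'(l) W(l).
  Submultiplicativity bounds it by the product of the norms of the B(i), and since
  1 + (sum of 2^(j-1) over 1 <= j < l) = 2^(l-1) the recursion yields
  m(l) <= 2^(l-1) ||B(1)|| ... ||B(l)||.
  For d = 0 the single summand j = l-1 already gives m(l) >= ||D'(l) W(l)|| m(l-1), so m(L) is at
  least the product of the norms of diag(beta(l)) W(l) = 2 B(l) (l < L) and of W(L) = B(L),
  which is the same quantity 2^(L-1) ||B(1)|| ... ||B(L)||.
\<close>

section \<open>l_p norms and induced operator norms\<close>

lemma ereal_ge_1_cases:
  assumes "1 \<le> (p::ereal)"
  obtains "p = \<infinity>" | r where "p = ereal r" "1 \<le> r"
  using assms by (cases p) auto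

lemma lp_norm_infinity: "lp_norm \<infinity> x = Max ({0} \<union> {\<bar>x $ i\<bar> | i. i < dim_vec x})"
  by (simp add: lp_norm_def)

lemma lp_norm_ereal: "lp_norm (ereal r) x = (\<Sum>i<dim_vec x. \<bar>x $ i\<bar> powr r) powr (1 / r)"
  by (simp add: lp_norm_def)

lemma finite_abs_entries [simp]: "finite {\<bar>x $ i\<bar> | i. i < n}"
  by (rule finite_image_set) simp

lemma lp_norm_infinity_le:
  assumes "0 \<le> M" and "\<And>i. i < dim_vec x \<Longrightarrow> \<bar>x $ i\<bar> \<le> M"
  shows "lp_norm \<infinity> x \<le> M"
  unfolding lp_norm_infinity by (rule Max.boundedI) (use assms in auto)

lemma lp_norm_nonneg:
  assumes "1 \<le> p"
  shows "0 \<le> lp_norm p x"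
  using assms by (cases rule: ereal_ge_1_cases) (auto simp: lp_norm_infinity lp_norm_ereal Max_ge_iff)

lemma abs_le_lp_norm:
  assumes "1 \<le> p" and i: "i < dim_vec x"
  shows "\<bar>x $ i\<bar> \<le> lp_norm p x"
  using assms(1)
proof (cases rule: ereal_ge_1_cases)
  case 1
  then show ?thesis using i by (auto simp: lp_norm_infinity Max_ge_iff)
next
  case (2 r)
  have "\<bar>x $ i\<bar> powr r \<le> (\<Sum>k<dim_vec x. \<bar>x $ k\<bar> powr r)"
    by (rule member_le_sum) (use i in auto)
  then have "(\<bar>x $ i\<bar> powr r) powr (1/r) \<le> (\<Sum>k<dim_vec x. \<bar>x $ k\<bar> powr r) powr (1/r)"
    using 2 by (intro powr_mono2) auto
  then show ?thesis using 2 by (simp add: lp_norm_ereal powr_powr)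
qed

lemma lp_norm_smult_le:
  assumes "1 \<le> p"
  shows "lp_norm p (c \<cdot>\<^sub>v x) \<le> \<bar>c\<bar> * lp_norm p x"
  using assms
proof (cases rule: ereal_ge_1_cases)
  case 1
  have "\<bar>(c \<cdot>\<^sub>v x) $ i\<bar> \<le> \<bar>c\<bar> * lp_norm p x" if "i < dim_vec x" for i
    using abs_le_lp_norm[OF assms that] by (simp add: abs_mult mult_left_mono that)
  then show ?thesis
    using lp_norm_nonneg[OF assms, of x] unfolding 1 by (intro lp_norm_infinity_le) auto
next
  case (2 r)
  have "(\<Sum>i<dim_vec x. \<bar>(c \<cdot>\<^sub>v x) $ i\<bar> powr r) = \<bar>c\<bar> powr r * (\<Sum>i<dim_vec x. \<bar>x $ i\<bar> powr r)"
    by (simp add: sum_distrib_left abs_mult powr_mult)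
  then show ?thesis
    using 2 by (simp add: lp_norm_ereal powr_mult powr_powr sum_nonneg)
qed

lemma lp_norm_zero_vec:
  assumes "1 \<le> p"
  shows "lp_norm p (0\<^sub>v n) = 0"
proof -
  have "lp_norm p (0 \<cdot>\<^sub>v 0\<^sub>v n) \<le> 0"
    using lp_norm_smult_le[OF assms, of 0] by simp
  moreover have "0 \<cdot>\<^sub>v 0\<^sub>v n = (0\<^sub>v n :: real vec)"
    by auto
  ultimately show ?thesis
    using lp_norm_nonneg[OF assms, of "0\<^sub>v n"] by simp
qed

lemma lp_norm_eq_0_imp_zero_vec:
  assumes "1 \<le> p" and "lp_norm p x = 0"
  shows "x = 0\<^sub>v (dim_vec x)"
  using abs_le_lp_norm[OF assms(1), of _ x] assms(2) by (auto intro: eq_vecI)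

lemma lp_norm_le_of_abs_le:
  assumes "1 \<le> p" and "0 \<le> M" and bound: "\<And>i. i < dim_vec y \<Longrightarrow> \<bar>y $ i\<bar> \<le> M"
  shows "lp_norm p y \<le> (real (dim_vec y) + 1) * M"
  using assms(1)
proof (cases rule: ereal_ge_1_cases)
  case 1
  have "M \<le> (real (dim_vec y) + 1) * M"
    using assms(2) by (simp add: algebra_simps)
  with bound assms(2) show ?thesis
    unfolding 1 by (intro lp_norm_infinity_le) (auto intro: order_trans)
next
  case (2 r)
  let ?n = "real (dim_vec y)"
  have "(\<Sum>i<dim_vec y. \<bar>y $ i\<bar> powr r) \<le> (\<Sum>i<dim_vec y. M powr r)"
    using bound 2 by (intro sum_mono powr_mono2) auto
  also have "\<dots> = ?n * M powr r"
    by simp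
  also have "\<dots> \<le> (?n + 1) powr r * M powr r"
  proof (rule mult_right_mono)
    have "?n \<le> (?n + 1) powr 1"
      by simp
    also have "\<dots> \<le> (?n + 1) powr r"
      using 2 by (intro powr_mono) auto
    finally show "?n \<le> (?n + 1) powr r" .
  qed simp
  also have "\<dots> = ((?n + 1) * M) powr r"
    using assms(2) by (simp add: powr_mult)
  finally have "(\<Sum>i<dim_vec y. \<bar>y $ i\<bar> powr r) powr (1/r) \<le> (((?n + 1) * M) powr r) powr (1/r)"
    using 2 by (intro powr_mono2) (auto intro: sum_nonneg)
  then show ?thesis
    using 2 assms(2) by (simp add: lp_norm_ereal powr_powr)
qed

lemma op_norm_bdd_above:
  assumes "1 \<le> p"
  shows "bdd_above {lp_norm p (A *\<^sub>v x) | x. x \<in> carrier_vec (dim_col A) \<and> lp_norm p x \<le> 1}"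
proof -
  define C where "C = (\<Sum>i<dim_row A. \<Sum>k<dim_col A. \<bar>A $$ (i, k)\<bar>)"
  have "lp_norm p (A *\<^sub>v x) \<le> (real (dim_row A) + 1) * C"
    if x: "x \<in> carrier_vec (dim_col A)" "lp_norm p x \<le> 1" for x
  proof -
    have "\<bar>(A *\<^sub>v x) $ i\<bar> \<le> C" if i: "i < dim_row A" for i
    proof -
      have "\<bar>(A *\<^sub>v x) $ i\<bar> = \<bar>\<Sum>k<dim_col A. A $$ (i, k) * x $ k\<bar>"
        using i x by (simp add: scalar_prod_def lessThan_atLeast0)
      also have "\<dots> \<le> (\<Sum>k<dim_col A. \<bar>A $$ (i, k)\<bar> * \<bar>x $ k\<bar>)"
        by (rule order_trans[OF sum_abs]) (simp add: abs_mult)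
      also have "\<dots> \<le> (\<Sum>k<dim_col A. \<bar>A $$ (i, k)\<bar>)"
        using x abs_le_lp_norm[OF assms, of _ x] by (intro sum_mono mult_left_le) force+
      also have "\<dots> \<le> C"
        unfolding C_def using i by (intro member_le_sum sum_nonneg) auto
      finally show ?thesis .
    qed
    moreover have "0 \<le> C"
      unfolding C_def by (intro sum_nonneg) auto
    ultimately show ?thesis
      using lp_norm_le_of_abs_le[OF assms, of C "A *\<^sub>v x"] by simp
  qed
  then show ?thesis
    unfolding bdd_above_def by blast
qed

lemma op_norm_set_nonempty:
  assumes "1 \<le> p"
  shows "{lp_norm p (A *\<^sub>v x) | x. x \<in> carrier_vec (dim_col A) \<and> lp_norm p x \<le> 1} \<noteq> {}"
  using lp_norm_zero_vec[OF assms, of "dim_col A"] by (auto intro!: exI[of _ "0\<^sub>v (dim_col A)"])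

lemma lp_norm_mult_vec_le_op_norm:
  assumes "1 \<le> p" and "x \<in> carrier_vec (dim_col A)" and "lp_norm p x \<le> 1"
  shows "lp_norm p (A *\<^sub>v x) \<le> op_norm p A"
  unfolding op_norm_def by (rule cSup_upper[OF _ op_norm_bdd_above[OF assms(1)]]) (use assms in auto)

lemma op_norm_le:
  assumes "1 \<le> p"
    and "\<And>x. x \<in> carrier_vec (dim_col A) \<Longrightarrow> lp_norm p x \<le> 1 \<Longrightarrow> lp_norm p (A *\<^sub>v x) \<le> M"
  shows "op_norm p A \<le> M"
  unfolding op_norm_def by (rule cSup_least[OF op_norm_set_nonempty[OF assms(1)]]) (use assms(2) in auto)

lemma mult_mat_zero_vec: "A *\<^sub>v 0\<^sub>v (dim_col A) = (0\<^sub>v (dim_row A) :: real vec)"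
  by (rule eq_vecI) auto

lemma op_norm_nonneg:
  assumes "1 \<le> p"
  shows "0 \<le> op_norm p A"
  using lp_norm_mult_vec_le_op_norm[OF assms, of "0\<^sub>v (dim_col A)" A]
  by (simp add: mult_mat_zero_vec lp_norm_zero_vec[OF assms])

lemma lp_norm_mult_vec_le:
  assumes "1 \<le> p" and x: "x \<in> carrier_vec (dim_col A)"
  shows "lp_norm p (A *\<^sub>v x) \<le> op_norm p A * lp_norm p x"
proof (cases "lp_norm p x = 0")
  case True
  then have "x = 0\<^sub>v (dim_col A)"
    using lp_norm_eq_0_imp_zero_vec[OF assms(1)] x by (metis carrier_vecD)
  then show ?thesis
    using True by (simp add: mult_mat_zero_vec lp_norm_zero_vec[OF assms(1)])
next
  case False
  define r where "r = lp_norm p x"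
  have r: "0 < r"
    using False lp_norm_nonneg[OF assms(1), of x] unfolding r_def by auto
  have "lp_norm p ((1/r) \<cdot>\<^sub>v x) \<le> 1"
    using lp_norm_smult_le[OF assms(1), of "1/r" x] r by (simp add: r_def)
  then have "lp_norm p ((1/r) \<cdot>\<^sub>v (A *\<^sub>v x)) \<le> op_norm p A"
    using lp_norm_mult_vec_le_op_norm[OF assms(1), of "(1/r) \<cdot>\<^sub>v x" A] x
    by (simp add: mult_mat_vec[OF carrier_matI x])
  moreover have "lp_norm p (A *\<^sub>v x) \<le> r * lp_norm p ((1/r) \<cdot>\<^sub>v (A *\<^sub>v x))"
    using lp_norm_smult_le[OF assms(1), of r "(1/r) \<cdot>\<^sub>v (A *\<^sub>v x)"] r
    by (simp add: smult_smult_assoc)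
  ultimately show ?thesis
    using r by (simp add: r_def mult.commute order_trans)
qed

lemma op_norm_mult_le:
  assumes "1 \<le> p" and A: "A \<in> carrier_mat n1 n2" and B: "B \<in> carrier_mat n2 n3"
  shows "op_norm p (A * B) \<le> op_norm p A * op_norm p B"
proof (rule op_norm_le[OF assms(1)])
  fix x assume x: "x \<in> carrier_vec (dim_col (A * B))" "lp_norm p x \<le> 1"
  have "lp_norm p (A * B *\<^sub>v x) = lp_norm p (A *\<^sub>v (B *\<^sub>v x))"
    using A B x by simp
  also have "\<dots> \<le> op_norm p A * lp_norm p (B *\<^sub>v x)"
    using A B x by (intro lp_norm_mult_vec_le[OF assms(1)]) auto
  also have "\<dots> \<le> op_norm p A * (op_norm p B * lp_norm p x)"
    using A B x by (intro mult_left_mono lp_norm_mult_vec_le op_norm_nonneg assms(1)) auto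
  also have "\<dots> \<le> op_norm p A * op_norm p B"
    using x op_norm_nonneg[OF assms(1)] by (intro mult_left_mono mult_left_le) auto
  finally show "lp_norm p (A * B *\<^sub>v x) \<le> op_norm p A * op_norm p B" .
qed

lemma op_norm_one_mat_le:
  assumes "1 \<le> p"
  shows "op_norm p (1\<^sub>m n) \<le> 1"
  by (rule op_norm_le[OF assms]) auto

lemma op_norm_smult_le:
  assumes "1 \<le> p"
  shows "op_norm p (c \<cdot>\<^sub>m A) \<le> \<bar>c\<bar> * op_norm p A"
proof (rule op_norm_le[OF assms])
  fix x assume x: "x \<in> carrier_vec (dim_col (c \<cdot>\<^sub>m A))" "lp_norm p x \<le> 1"
  then have "(c \<cdot>\<^sub>m A) *\<^sub>v x = c \<cdot>\<^sub>v (A *\<^sub>v x)"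
    by auto
  then have "lp_norm p ((c \<cdot>\<^sub>m A) *\<^sub>v x) \<le> \<bar>c\<bar> * lp_norm p (A *\<^sub>v x)"
    using lp_norm_smult_le[OF assms] by simp
  also have "\<dots> \<le> \<bar>c\<bar> * op_norm p A"
    using x by (intro mult_left_mono lp_norm_mult_vec_le_op_norm[OF assms]) auto
  finally show "lp_norm p ((c \<cdot>\<^sub>m A) *\<^sub>v x) \<le> \<bar>c\<bar> * op_norm p A" .
qed

lemma op_norm_smult:
  assumes "1 \<le> p"
  shows "op_norm p (c \<cdot>\<^sub>m A) = \<bar>c\<bar> * op_norm p A"
proof (cases "c = 0")
  case True
  have "op_norm p (0 \<cdot>\<^sub>m A) \<le> 0"
    using op_norm_smult_le[OF assms, of 0 A] by simp
  then show ?thesis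
    using True op_norm_nonneg[OF assms, of "0 \<cdot>\<^sub>m A"] by simp
next
  case False
  have "A = (1/c) \<cdot>\<^sub>m (c \<cdot>\<^sub>m A)"
    using False by (auto intro!: eq_matI)
  then have "op_norm p A \<le> \<bar>1/c\<bar> * op_norm p (c \<cdot>\<^sub>m A)"
    using op_norm_smult_le[OF assms, of "1/c" "c \<cdot>\<^sub>m A"] by simp
  then have "\<bar>c\<bar> * op_norm p A \<le> op_norm p (c \<cdot>\<^sub>m A)"
    using False by (simp add: field_simps)
  with op_norm_smult_le[OF assms] show ?thesis
    by (simp add: eq_iff)
qed

section \<open>Products of layer matrices\<close>

lemma chain_self: "chain n D W j j = 1\<^sub>m (n j)"
  by (cases j) auto

lemma chain_cong:
  assumes "\<And>i. j < i \<Longrightarrow> i \<le> k \<Longrightarrow> D i * W i = D' i * W i"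
  shows "chain n D W j k = chain n D' W j k"
  using assms by (induction k) auto

lemma chain_carrier_mat:
  assumes "\<And>i. j < i \<Longrightarrow> i \<le> k \<Longrightarrow> D i * W i \<in> carrier_mat (n i) (n (i - 1))"
    and "j \<le> k"
  shows "chain n D W j k \<in> carrier_mat (n k) (n j)"
  using assms
proof (induction k)
  case (Suc k)
  show ?case
  proof (cases "j = Suc k")
    case False
    then have jk: "j \<le> k"
      using Suc.prems(2) by simp
    have "D (Suc k) * W (Suc k) \<in> carrier_mat (n (Suc k)) (n k)"
      using Suc.prems(1)[of "Suc k"] jk by simp
    moreover have "chain n D W j k \<in> carrier_mat (n k) (n j)"
      using Suc.IH Suc.prems(1) jk by simp
    ultimately show ?thesis
      using jk by (simp add: mult_carrier_mat)
  qed (simp add: chain_self)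
qed simp

lemma op_norm_chain_le:
  assumes "1 \<le> p"
    and carrier: "\<And>i. j < i \<Longrightarrow> i \<le> k \<Longrightarrow> D i * W i \<in> carrier_mat (n i) (n (i - 1))"
    and "j \<le> k"
  shows "op_norm p (chain n D W j k) \<le> (\<Prod>i\<in>{Suc j..k}. op_norm p (D i * W i))"
  using carrier \<open>j \<le> k\<close>
proof (induction k)
  case 0
  then show ?case
    using op_norm_one_mat_le[OF assms(1)] by simp
next
  case (Suc k)
  show ?case
  proof (cases "j = Suc k")
    case True
    then show ?thesis
      using op_norm_one_mat_le[OF assms(1)] by (simp add: chain_self)
  next
    case False
    then have jk: "j \<le> k"
      using Suc.prems by simp
    have "D (Suc k) * W (Suc k) \<in> carrier_mat (n (Suc k)) (n k)"
      using Suc.prems(1)[of "Suc k"] jk by simp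
    moreover have "chain n D W j k \<in> carrier_mat (n k) (n j)"
      using Suc.prems jk by (intro chain_carrier_mat) auto
    ultimately have "op_norm p (chain n D W j (Suc k))
        \<le> op_norm p (D (Suc k) * W (Suc k)) * op_norm p (chain n D W j k)"
      using jk by (simp add: op_norm_mult_le[OF assms(1)])
    also have "\<dots> \<le> op_norm p (D (Suc k) * W (Suc k)) * (\<Prod>i\<in>{Suc j..k}. op_norm p (D i * W i))"
      using jk Suc by (intro mult_left_mono op_norm_nonneg[OF assms(1)]) auto
    also have "\<dots> = (\<Prod>i\<in>{Suc j..Suc k}. op_norm p (D i * W i))"
      using jk by (simp add: mult.commute)
    finally show ?thesis .
  qed
qed

section \<open>Recurrences of the shape of m(l)\<close>

lemma one_plus_sum_pow2: "1 + (\<Sum>j\<in>{1..<Suc k}. (2::real) ^ (j - 1)) = 2 ^ k"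
  by (induction k) auto

lemma prod_atLeastAtMost_split:
  fixes f :: "nat \<Rightarrow> 'a::comm_monoid_mult"
  assumes "j \<le> l"
  shows "prod f {1..j} * prod f {Suc j..l} = prod f {1..l}"
  using assms prod.atLeastLessThan_concat[of 1 "Suc j" "Suc l" f]
  by (simp add: atLeastLessThanSuc_atLeastAtMost)

lemma recurrence_le_pow2_prod:
  fixes m c :: "nat \<Rightarrow> real" and a :: "nat \<Rightarrow> nat \<Rightarrow> real"
  assumes rec: "\<And>l. 1 \<le> l \<Longrightarrow> m l = a 0 l + (\<Sum>j\<in>{1..<l}. a j l * m j)"
    and a_nonneg: "\<And>j l. 0 \<le> a j l"
    and a_le: "\<And>j l. j < l \<Longrightarrow> l \<le> L \<Longrightarrow> a j l \<le> (\<Prod>i\<in>{Suc j..l}. c i)"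
    and c_nonneg: "\<And>i. 0 \<le> c i"
    and "1 \<le> l" "l \<le> L"
  shows "m l \<le> 2 ^ (l - 1) * (\<Prod>i\<in>{1..l}. c i)"
  using \<open>1 \<le> l\<close> \<open>l \<le> L\<close>
proof (induction l rule: less_induct)
  case (less l)
  let ?P = "\<lambda>l. \<Prod>i\<in>{1..l}. c i"
  have "a j l * m j \<le> 2 ^ (j - 1) * ?P l" if j: "j \<in> {1..<l}" for j
  proof -
    have "a j l * m j \<le> a j l * (2 ^ (j - 1) * ?P j)"
      using j less by (intro mult_left_mono a_nonneg less.IH) auto
    also have "\<dots> \<le> (\<Prod>i\<in>{Suc j..l}. c i) * (2 ^ (j - 1) * ?P j)"
      using j less by (intro mult_right_mono a_le) (auto intro!: mult_nonneg_nonneg prod_nonneg c_nonneg)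
    also have "\<dots> = 2 ^ (j - 1) * ?P l"
      using prod_atLeastAtMost_split[of j l c] j by (simp add: mult_ac)
    finally show ?thesis .
  qed
  moreover have "a 0 l \<le> ?P l"
    using a_le[of 0 l] less.prems by simp
  ultimately have "a 0 l + (\<Sum>j\<in>{1..<l}. a j l * m j) \<le> ?P l + (\<Sum>j\<in>{1..<l}. 2 ^ (j - 1) * ?P l)"
    by (intro add_mono sum_mono) auto
  then have "m l \<le> ?P l + (\<Sum>j\<in>{1..<l}. 2 ^ (j - 1) * ?P l)"
    using rec[OF less.prems(1)] by simp
  also have "\<dots> = (1 + (\<Sum>j\<in>{1..<l}. 2 ^ (j - 1))) * ?P l"
    by (simp only: distrib_right sum_distrib_right mult_1)
  also have "\<dots> = 2 ^ (l - 1) * ?P l"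
    using one_plus_sum_pow2[of "l - 1"] less.prems by simp
  finally show ?case .
qed

lemma prod_le_recurrence:
  fixes m :: "nat \<Rightarrow> real" and a :: "nat \<Rightarrow> nat \<Rightarrow> real"
  assumes rec: "\<And>l. 1 \<le> l \<Longrightarrow> m l = a 0 l + (\<Sum>j\<in>{1..<l}. a j l * m j)"
    and a_nonneg: "\<And>j l. 0 \<le> a j l"
    and m_nonneg: "\<And>l. 0 \<le> m l"
    and "1 \<le> l"
  shows "(\<Prod>i\<in>{1..l}. a (i - 1) i) \<le> m l"
  using \<open>1 \<le> l\<close>
proof (induction l)
  case 0
  then show ?case by simp
next
  case (Suc k)
  show ?case
  proof (cases "k = 0")
    case True
    then show ?thesis
      using rec[of 1] by simp
  next
    case False
    have "(\<Prod>i\<in>{1..Suc k}. a (i - 1) i) = a k (Suc k) * (\<Prod>i\<in>{1..k}. a (i - 1) i)"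
      by (simp add: mult.commute)
    also have "\<dots> \<le> a k (Suc k) * m k"
      using False Suc.IH by (intro mult_left_mono a_nonneg) auto
    also have "\<dots> \<le> (\<Sum>j\<in>{1..<Suc k}. a j (Suc k) * m j)"
      using False by (intro member_le_sum mult_nonneg_nonneg a_nonneg m_nonneg) auto
    also have "\<dots> \<le> m (Suc k)"
      using rec[of "Suc k"] a_nonneg[of 0 "Suc k"] by simp
    finally show ?thesis .
  qed
qed

section \<open>Bounds on m(l)\<close>

declare mbound.simps [simp del]

lemma mbound_recurrence:
  assumes "1 \<le> l"
  shows "mbound p n L W beta d l =
      op_norm p (Dprime n L beta d l * W l * chain n (\<lambda>i. diag_of_vec (d i)) W 0 (l - 1))
    + (\<Sum>j\<in>{1..<l}. op_norm p (Dprime n L beta d l * W l * chain n (\<lambda>i. diag_of_vec (d i)) W j (l - 1))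
                      * mbound p n L W beta d j)"
  using assms by (subst mbound.simps) simp

lemma mbound_nonneg:
  assumes "1 \<le> p"
  shows "0 \<le> mbound p n L W beta d l"
proof (induction l rule: less_induct)
  case (less l)
  show ?case
    by (subst mbound.simps)
       (auto intro!: add_nonneg_nonneg sum_nonneg mult_nonneg_nonneg op_norm_nonneg[OF assms] less)
qed

lemma prod_op_norm_layers_le_mbound:
  assumes "1 \<le> p" and W: "\<And>l. 1 \<le> l \<Longrightarrow> l \<le> L \<Longrightarrow> W l \<in> carrier_mat (n l) (n (l - 1))"
    and "1 \<le> L"
  shows "(\<Prod>l\<in>{1..L}. op_norm p (Dprime n L beta d l * W l)) \<le> mbound p n L W beta d L"
proof -
  let ?a = "\<lambda>j l. op_norm p (Dprime n L beta d l * W l * chain n (\<lambda>i. diag_of_vec (d i)) W j (l - 1))"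
  have "?a (l - 1) l = op_norm p (Dprime n L beta d l * W l)" if "l \<in> {1..L}" for l
    using W[of l] that by (simp add: chain_self)
  then have "(\<Prod>l\<in>{1..L}. op_norm p (Dprime n L beta d l * W l)) = (\<Prod>l\<in>{1..L}. ?a (l - 1) l)"
    by (intro prod.cong) auto
  also have "\<dots> \<le> mbound p n L W beta d L"
    using mbound_recurrence op_norm_nonneg[OF assms(1)] mbound_nonneg[OF assms(1)] \<open>1 \<le> L\<close>
    by (rule prod_le_recurrence)
  finally show ?thesis .
qed

lemma Dprime_half:
  assumes "l \<noteq> L"
  shows "Dprime n L beta (\<lambda>l. (1/2) \<cdot>\<^sub>v beta l) l = diag_of_vec ((1/2) \<cdot>\<^sub>v beta l)"
proof -
  have "beta l - (1/2) \<cdot>\<^sub>v beta l = (1/2) \<cdot>\<^sub>v beta l"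
    by (rule eq_vecI) auto
  then show ?thesis
    using assms by (simp add: Dprime_def)
qed

lemma mbound_half_le:
  assumes "1 \<le> p"
    and W: "\<And>l. 1 \<le> l \<Longrightarrow> l \<le> L \<Longrightarrow> W l \<in> carrier_mat (n l) (n (l - 1))"
    and beta: "\<And>l. 1 \<le> l \<Longrightarrow> l < L \<Longrightarrow> beta l \<in> carrier_vec (n l)"
    and "1 \<le> L"
  defines "dh \<equiv> \<lambda>l. (1/2) \<cdot>\<^sub>v beta l"
  shows "mbound p n L W beta dh L \<le> 2 ^ (L - 1) * (\<Prod>l\<in>{1..L}. op_norm p (Dprime n L beta dh l * W l))"
proof -
  define B where "B l = Dprime n L beta dh l * W l" for l
  have B_carrier: "B l \<in> carrier_mat (n l) (n (l - 1))" if "1 \<le> l" "l \<le> L" for l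
    using W[OF that] beta[of l] that by (auto simp: B_def Dprime_def diag_of_vec_def dh_def)
  have chain_B: "chain n (\<lambda>i. diag_of_vec (dh i)) W j k = chain n (Dprime n L beta dh) W j k"
    if "k < L" for j k
    using that by (intro chain_cong) (simp add: Dprime_half dh_def)
  have "op_norm p (B l * chain n (\<lambda>i. diag_of_vec (dh i)) W j (l - 1))
      \<le> (\<Prod>i\<in>{Suc j..l}. op_norm p (B i))" if "j < l" "l \<le> L" for j l
  proof -
    have carrier: "Dprime n L beta dh i * W i \<in> carrier_mat (n i) (n (i - 1))"
      if "j < i" "i \<le> l - 1" for i
      using B_carrier[of i] that \<open>l \<le> L\<close> by (simp add: B_def)
    have "chain n (Dprime n L beta dh) W j (l - 1) \<in> carrier_mat (n (l - 1)) (n j)"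
      using that by (intro chain_carrier_mat carrier) auto
    then have "op_norm p (B l * chain n (Dprime n L beta dh) W j (l - 1))
        \<le> op_norm p (B l) * op_norm p (chain n (Dprime n L beta dh) W j (l - 1))"
      using that B_carrier[of l] by (intro op_norm_mult_le[OF assms(1)]) auto
    also have "\<dots> \<le> op_norm p (B l) * (\<Prod>i\<in>{Suc j..l - 1}. op_norm p (B i))"
      using that op_norm_chain_le[where D = "Dprime n L beta dh" and W = W and n = n, OF assms(1) carrier]
      by (intro mult_left_mono op_norm_nonneg[OF assms(1)]) (auto simp: B_def)
    also have "\<dots> = (\<Prod>i\<in>{Suc j..l}. op_norm p (B i))"
      using that prod.cl_ivl_Suc[of "\<lambda>i. op_norm p (B i)" "Suc j" "l - 1"]
      by (simp add: mult.commute)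
    finally show ?thesis
      using that chain_B[of "l - 1" j] by simp
  qed
  then show ?thesis
    using mbound_recurrence op_norm_nonneg[OF assms(1)] \<open>1 \<le> L\<close>
    unfolding B_def by (intro recurrence_le_pow2_prod[where L = L]) auto
qed

lemma op_norm_layer_zero_eq_double:
  assumes "1 \<le> p" and "W l \<in> carrier_mat (n l) k" and "beta l \<in> carrier_vec (n l)" and "l \<noteq> L"
  shows "op_norm p (Dprime n L beta (\<lambda>l. 0\<^sub>v (n l)) l * W l)
       = 2 * op_norm p (Dprime n L beta (\<lambda>l. (1/2) \<cdot>\<^sub>v beta l) l * W l)"
proof -
  have half_carrier: "Dprime n L beta (\<lambda>l. (1/2) \<cdot>\<^sub>v beta l) l \<in> carrier_mat (n l) (n l)"
    using assms(3,4) by (simp add: Dprime_half diag_of_vec_def)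
  have "Dprime n L beta (\<lambda>l. 0\<^sub>v (n l)) l = 2 \<cdot>\<^sub>m Dprime n L beta (\<lambda>l. (1/2) \<cdot>\<^sub>v beta l) l"
    using assms(3,4) by (auto intro!: eq_matI simp: Dprime_half Dprime_def diag_of_vec_def)
  then show ?thesis
    using half_carrier assms(2) by (simp add: mult_smult_assoc_mat op_norm_smult[OF assms(1)])
qed

theorem proposition1:
  fixes p :: ereal and L :: nat and n :: "nat \<Rightarrow> nat"
    and W :: "nat \<Rightarrow> real mat" and alpha beta :: "nat \<Rightarrow> real vec"
  assumes "1 \<le> p"
    and "L \<ge> 1"
    and "\<And>l. 1 \<le> l \<Longrightarrow> l \<le> L \<Longrightarrow> W l \<in> carrier_mat (n l) (n (l - 1))"
    and "\<And>l. 1 \<le> l \<Longrightarrow> l \<le> L - 1 \<Longrightarrow> alpha l \<in> carrier_vec (n l) \<and> beta l \<in> carrier_vec (n l)"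
    and "\<And>l i. 1 \<le> l \<Longrightarrow> l \<le> L - 1 \<Longrightarrow> i < n l \<Longrightarrow> 0 \<le> alpha l $ i \<and> alpha l $ i \<le> beta l $ i"
  shows "mbound p n L W beta (\<lambda>l. (1/2) \<cdot>\<^sub>v beta l) L \<le> mbound p n L W beta (\<lambda>l. 0\<^sub>v (n l)) L"
proof -
  let ?half = "\<lambda>l. (1/2) \<cdot>\<^sub>v beta l" and ?zero = "\<lambda>l. 0\<^sub>v (n l)"
  let ?N = "\<lambda>d l. op_norm p (Dprime n L beta d l * W l)"
  have beta: "beta l \<in> carrier_vec (n l)" if "1 \<le> l" "l < L" for l
    using assms(4)[of l] that by simp
  have double: "?N ?zero l = 2 * ?N ?half l" if "l \<in> {1..<L}" for l
    using that assms(3)[of l] beta[of l] by (intro op_norm_layer_zero_eq_double[OF assms(1)]) auto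
  have last: "?N ?zero L = ?N ?half L"
    by (simp add: Dprime_def)
  have split_last: "(\<Prod>l\<in>{1..L}. f l) = (\<Prod>l\<in>{1..<L}. f l) * f L" for f :: "nat \<Rightarrow> real"
    using assms(2) prod.atLeastLessThan_Suc[of 1 "L - 1" f]
    by (simp add: atLeastLessThanSuc_atLeastAtMost[symmetric])
  have "mbound p n L W beta ?half L \<le> 2 ^ (L - 1) * (\<Prod>l\<in>{1..L}. ?N ?half l)"
    by (rule mbound_half_le[where W = W and n = n, OF assms(1,3) beta assms(2)])
  also have "\<dots> = (\<Prod>l\<in>{1..<L}. 2 * ?N ?half l) * ?N ?half L"
    unfolding split_last by (simp add: prod.distrib)
  also have "\<dots> = (\<Prod>l\<in>{1..<L}. ?N ?zero l) * ?N ?zero L"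
    using double last by simp
  also have "\<dots> = (\<Prod>l\<in>{1..L}. ?N ?zero l)"
    unfolding split_last ..
  also have "\<dots> \<le> mbound p n L W beta ?zero L"
    by (rule prod_op_norm_layers_le_mbound[where W = W and n = n, OF assms(1,3,2)])
  finally show ?thesis .
qed

end
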